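(* Let $Q$ be a non-degenerate self-intersecting quadrangle of perimeter $2$. Then its dual quadrangle $Q^\circ$ is also self-intersecting.
   Context: Identify $\mathbb{R}^2$ with $\mathbb{C}$. A quadrangle $Q=ABCD$ is an ordered 4-tuple of points $A,B,C,D\in\mathbb{C}$: $A$ is the first vertex and the order $A\to B\to C\to D\to A$ is the direction of traversal. Its edge vectors are $z_1=B-A$, $z_2=C-B$, $z_3=D-C$, $z_4=A-D$, so $z_1+z_2+z_3+z_4=0$; its perimeter is $|z_1|+|z_2|+|z_3|+|z_4|$. $Q$ is non-degenerate if each pair of consecutive edge vectors $(z_1,z_2),(z_2,z_3),(z_3,z_4),(z_4,z_1)$ consists of nonzero, non-collinear vectors. A non-degenerate quadrangle is self-intersecting if one of the pairs of opposite edges (segments $AB$ and $CD$, or $BC$ and $DA$) intersect; it is convex if it is not self-intersecting and all its interior angles are less than $\pi$; it is non-convex if it is neither self-intersecting nor convex. Associated plane: for a non-degenerate $Q$ of perimeter $2$, choose $u_1,\dots,u_4\in\mathbb{C}$ with $u_k^2=z_k$, where $u_1$ is an arbitrary square root of $z_1$ and for $k=1,2,3$ the sign of $u_{k+1}$ is chosen so that $\operatorname{Im}(\overline{u_k}u_{k+1})$ has the same sign as $\operatorname{Im}(\overline{z_k}z_{k+1})$. Write $u_k=a_k+i b_k$ and $\bar a=(a_1,a_2,a_3,a_4)$, $\bar b=(b_1,b_2,b_3,b_4)$; these are orthonormal in $\mathbb{R}^4$. Let $\Pi=\operatorname{span}(\bar a,\bar b)$ and $\Pi^\perp$ its orthogonal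 complement. Dual quadrangle: choose an orthonormal basis $(\bar c,\bar d)$ of $\Pi^\perp$, put $w_k=(c_k+i d_k)^2$; then $\sum_k w_k=0$ and $\sum_k|w_k|=2$. The dual quadrangle $Q^\circ=KLMN$ is the quadrangle with $L-K=w_1$, $M-L=w_2$, $N-M=w_3$, $K-N=w_4$. It is determined up to rotation, reflection and translation. *)

theory Defs
  imports "HOL-Analysis.Analysis"
begin

type_synonym quad = "complex \<times> complex \<times> complex \<times> complex"

text \<open>Edge vectors, indexed 0..3: z_1 = B-A, z_2 = C-B, z_3 = D-C, z_4 = A-D.\<close>
definition edge :: "quad \<Rightarrow> nat \<Rightarrow> complex" where
  "edge Q k = (case Q of (A, B, C, D) \<Rightarrow>
     (if k = 0 then B - A else if k = 1 then C - B else if k = 2 then D - C else A - D))"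

definition perimeter :: "quad \<Rightarrow> real" where
  "perimeter Q = (\<Sum>k<4. cmod (edge Q k))"

definition nondegenerate :: "quad \<Rightarrow> bool" where
  "nondegenerate Q \<longleftrightarrow> (\<forall>k<4. edge Q k \<noteq> 0 \<and> edge Q ((k + 1) mod 4) \<noteq> 0 \<and>
       \<not> collinear {0, edge Q k, edge Q ((k + 1) mod 4)})"

definition self_intersecting :: "quad \<Rightarrow> bool" where
  "self_intersecting Q \<longleftrightarrow> nondegenerate Q \<and>
     (case Q of (A, B, C, D) \<Rightarrow>
        closed_segment A B \<inter> closed_segment C D \<noteq> {} \<or>
        closed_segment B C \<inter> closed_segment D A \<noteq> {})"

text \<open>Admissible choice of square roots u_k (indices 0..3) of the edge vectors, with the
  sign convention of the associated plane.\<close>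
definition assoc_roots :: "quad \<Rightarrow> (nat \<Rightarrow> complex) \<Rightarrow> bool" where
  "assoc_roots Q u \<longleftrightarrow> (\<forall>k<4. (u k)\<^sup>2 = edge Q k) \<and>
     (\<forall>k<3. sgn (Im (cnj (u k) * u (k + 1))) = sgn (Im (cnj (edge Q k) * edge Q (k + 1))))"

text \<open>(c,d) is an orthonormal basis of the orthogonal complement in R^4 of
  span(a,b), where a_k = Re u_k, b_k = Im u_k (a, b orthonormal, so any orthonormal pair
  orthogonal to both spans the complement).\<close>
definition perp_onb :: "(nat \<Rightarrow> complex) \<Rightarrow> (nat \<Rightarrow> real) \<Rightarrow> (nat \<Rightarrow> real) \<Rightarrow> bool" where
  "perp_onb u c d \<longleftrightarrow>
     (\<Sum>k<4. c k * Re (u k)) = 0 \<and> (\<Sum>k<4. c k * Im (u k)) = 0 \<and>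
     (\<Sum>k<4. d k * Re (u k)) = 0 \<and> (\<Sum>k<4. d k * Im (u k)) = 0 \<and>
     (\<Sum>k<4. c k * c k) = 1 \<and> (\<Sum>k<4. d k * d k) = 1 \<and> (\<Sum>k<4. c k * d k) = 0"

definition dual_quad :: "complex \<Rightarrow> (nat \<Rightarrow> real) \<Rightarrow> (nat \<Rightarrow> real) \<Rightarrow> quad" where
  "dual_quad K c d = (let w = (\<lambda>k. (Complex (c k) (d k))\<^sup>2) in
     (K, K + w 0, K + w 0 + w 1, K + w 0 + w 1 + w 2))"

end

theory Submission
  imports Defs
begin

(*
  Let t_k = Im (cnj z_k * z_(k+1)) be the turn at the k-th edge. Since t_0 + t_2 = t_1 + t_3, a
  quadrangle is self-intersecting exactly when t_0 t_2 < 0 and t_1 t_3 < 0. For z_k = u_k^2 one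
  has t_k = 2 Re (cnj u_k * u_(k+1)) Im (cnj u_k * u_(k+1)). The vectors a, b, c, d are the
  columns of an orthogonal 4x4 matrix. Orthogonality of its rows gives
  Re (cnj w_k * w_(k+1)) = - Re (cnj u_k * u_(k+1)) for the dual roots w_k = c_k + i d_k, and
  c \<and> d = \<plusminus>\<star>(a \<and> b) matches Im (cnj w_k * w_(k+1)) with \<plusminus>Im (cnj u_(k+2) * u_(k+3)).
  Hence the products t_0 t_2 and t_1 t_3 of the dual quadrangle equal those of Q.
*)

definition cross :: "complex \<Rightarrow> complex \<Rightarrow> real" where
  "cross z w = Im (cnj z * w)"

lemma cross_eq: "cross z w = Re z * Im w - Im z * Re w"
  by (simp add: cross_def)

lemma collinear_0_iff_cross: "collinear {0, z, w} \<longleftrightarrow> cross z w = 0"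
proof (cases "z = 0")
  case False
  have "Im (w / z) = cross z w / (cmod z)\<^sup>2"
    by (simp add: Im_divide cross_eq cmod_power2 algebra_simps)
  with False show ?thesis
    by (simp add: collinear_iff_Reals complex_is_Real_iff)
qed (simp add: cross_def)

lemma cross_power2: "cross (z\<^sup>2) (w\<^sup>2) = 2 * Re (cnj z * w) * cross z w"
  by (simp add: cross_def power_mult_distrib[symmetric] Im_power2)

lemma mult_nonpos_if_convex_comb_zero:
  fixes x y t :: real
  assumes "(1 - t) * x + t * y = 0" "0 \<le> t" "t \<le> 1"
  shows "x * y \<le> 0"
proof (rule ccontr)
  have no_pos_root: False if "0 < x'" "0 < y'" "(1 - t) * x' + t * y' = 0" for x' y'
    using that assms(2,3) by (smt (verit) mult_eq_0_iff split_mult_pos_le)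
  assume "\<not> x * y \<le> 0"
  then have "0 < x \<and> 0 < y \<or> 0 < - x \<and> 0 < - y"
    by (auto simp: not_le zero_less_mult_iff)
  with assms(1) show False
    using no_pos_root[of x y] no_pos_root[of "- x" "- y"] by auto
qed

lemma divide_diff_mem_unit_interval:
  fixes x y :: real
  assumes "x * y < 0"
  shows "0 \<le> x / (x - y)" "x / (x - y) \<le> 1"
  using assms by (auto simp: divide_simps mult_less_0_iff)

lemma convex_comb_divide_diff:
  fixes x y :: real and P Q :: "'a::real_vector"
  assumes "x \<noteq> y"
  shows "(1 - x / (x - y)) *\<^sub>R P + (x / (x - y)) *\<^sub>R Q
    = (x *\<^sub>R Q - y *\<^sub>R P) /\<^sub>R (x - y)"
proof -
  have "1 - x / (x - y) = - y / (x - y)"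
    using assms by (simp add: field_simps)
  then show ?thesis
    by (simp add: scaleR_diff_right divide_inverse mult.commute)
qed

lemma cross_sign_if_closed_segments_meet:
  assumes "closed_segment A B \<inter> closed_segment C D \<noteq> {}"
  shows "cross (B - A) (C - A) * cross (B - A) (D - A) \<le> 0"
proof -
  obtain s t where t: "0 \<le> t" "t \<le> 1"
    and meet: "(1 - s) *\<^sub>R A + s *\<^sub>R B = (1 - t) *\<^sub>R C + t *\<^sub>R D"
    using assms by (auto simp: in_segment)
  have "(1 - t) * cross (B - A) (C - A) + t * cross (B - A) (D - A)
      = cross (B - A) ((1 - t) *\<^sub>R C + t *\<^sub>R D - A)"
    by (simp add: cross_eq algebra_simps)
  also have "(1 - t) *\<^sub>R C + t *\<^sub>R D - A = s *\<^sub>R (B - A)"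
    unfolding meet[symmetric] by (simp add: algebra_simps)
  also have "cross (B - A) (s *\<^sub>R (B - A)) = 0"
    by (simp add: cross_eq)
  finally show ?thesis
    using t by (rule mult_nonpos_if_convex_comb_zero)
qed

lemma closed_segments_meet_if_cross_sign:
  assumes "cross (B - A) (C - A) * cross (B - A) (D - A) < 0"
    and "cross (D - C) (A - C) * cross (D - C) (B - C) < 0"
  shows "closed_segment A B \<inter> closed_segment C D \<noteq> {}"
proof -
  define X Y X' Y' where "X = cross (B - A) (C - A)" and "Y = cross (B - A) (D - A)"
    and "X' = cross (D - C) (A - C)" and "Y' = cross (D - C) (B - C)"
  define t s where "t = X / (X - Y)" and "s = X' / (X' - Y')"
  have "X \<noteq> Y" "X' \<noteq> Y'"
    using assms by (auto simp: X_def Y_def X'_def Y'_def)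
  have diff: "X' - Y' = - (X - Y)"
    by (simp add: X_def Y_def X'_def Y'_def cross_eq algebra_simps)
  have cramer: "X' *\<^sub>R B - Y' *\<^sub>R A = - (X *\<^sub>R D - Y *\<^sub>R C)"
    by (simp add: X_def Y_def X'_def Y'_def complex_eq_iff cross_eq algebra_simps)
  have "(1 - t) *\<^sub>R C + t *\<^sub>R D = (X *\<^sub>R D - Y *\<^sub>R C) /\<^sub>R (X - Y)"
    unfolding t_def using \<open>X \<noteq> Y\<close> by (rule convex_comb_divide_diff)
  also have "\<dots> = (X' *\<^sub>R B - Y' *\<^sub>R A) /\<^sub>R (X' - Y')"
    unfolding cramer diff
    by (simp only: inverse_minus_eq scaleR_minus_left scaleR_minus_right minus_minus)
  also have "\<dots> = (1 - s) *\<^sub>R A + s *\<^sub>R B"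
    unfolding s_def using \<open>X' \<noteq> Y'\<close> by (rule convex_comb_divide_diff[symmetric])
  finally have meet: "(1 - t) *\<^sub>R C + t *\<^sub>R D = (1 - s) *\<^sub>R A + s *\<^sub>R B" .
  have "0 \<le> t" "t \<le> 1" "0 \<le> s" "s \<le> 1"
    using assms unfolding t_def s_def X_def Y_def X'_def Y'_def
    by (auto intro: divide_diff_mem_unit_interval)
  then have "(1 - s) *\<^sub>R A + s *\<^sub>R B \<in> closed_segment A B"
    and "(1 - t) *\<^sub>R C + t *\<^sub>R D \<in> closed_segment C D"
    by (auto simp: in_segment)
  with meet show ?thesis
    by auto
qed

definition turn :: "quad \<Rightarrow> nat \<Rightarrow> real" where
  "turn Q k = cross (edge Q k) (edge Q ((k + 1) mod 4))"

lemma turn_eq: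
  "turn Q 0 = cross (edge Q 0) (edge Q 1)" "turn Q 1 = cross (edge Q 1) (edge Q 2)"
  "turn Q 2 = cross (edge Q 2) (edge Q 3)" "turn Q 3 = cross (edge Q 3) (edge Q 0)"
  by (simp_all add: turn_def del: One_nat_def)

lemma nondegenerate_iff_turn: "nondegenerate Q \<longleftrightarrow> (\<forall>k<4. turn Q k \<noteq> 0)"
  unfolding nondegenerate_def turn_def collinear_0_iff_cross by (auto simp: cross_def)

text \<open>Both sides equal the cross product of the diagonals \<open>C - A\<close> and \<open>D - B\<close>.\<close>
lemma turn_add_turn: "turn Q 0 + turn Q 2 = turn Q 1 + turn Q 3"
  by (cases Q) (simp add: turn_def edge_def cross_eq algebra_simps)

lemma cross_vertices_turn:
  "cross (B - A) (C - A) = turn (A, B, C, D) 0" "cross (B - A) (D - A) = turn (A, B, C, D) 3"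
  "cross (D - C) (A - C) = turn (A, B, C, D) 2" "cross (D - C) (B - C) = turn (A, B, C, D) 1"
  "cross (C - B) (D - B) = turn (A, B, C, D) 1" "cross (C - B) (A - B) = turn (A, B, C, D) 0"
  "cross (A - D) (B - D) = turn (A, B, C, D) 3" "cross (A - D) (C - D) = turn (A, B, C, D) 2"
  by (simp_all add: turn_def edge_def cross_eq algebra_simps)

lemma self_intersecting_iff_turn:
  "self_intersecting Q \<longleftrightarrow> turn Q 0 * turn Q 2 < 0 \<and> turn Q 1 * turn Q 3 < 0"
proof -
  obtain A B C D where Q: "Q = (A, B, C, D)"
    by (cases Q) auto
  note cross_turn = cross_vertices_turn[where A = A and B = B and C = C and D = D, folded Q]
  show ?thesis
  proof
    assume si: "self_intersecting Q"
    then have nonzero: "turn Q k \<noteq> 0" if "k < 4" for k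
      using that by (simp add: self_intersecting_def nondegenerate_iff_turn)
    have "closed_segment A B \<inter> closed_segment C D \<noteq> {}
        \<or> closed_segment B C \<inter> closed_segment D A \<noteq> {}"
      using si by (simp add: self_intersecting_def Q)
    then have "turn Q 0 * turn Q 3 \<le> 0 \<and> turn Q 2 * turn Q 1 \<le> 0
        \<or> turn Q 1 * turn Q 0 \<le> 0 \<and> turn Q 3 * turn Q 2 \<le> 0"
      using cross_sign_if_closed_segments_meet[of A B C D] cross_sign_if_closed_segments_meet[of C D A B]
        cross_sign_if_closed_segments_meet[of B C D A] cross_sign_if_closed_segments_meet[of D A B C]
      unfolding cross_turn by (auto simp: Int_commute)
    then show "turn Q 0 * turn Q 2 < 0 \<and> turn Q 1 * turn Q 3 < 0"
      using nonzero[of 0] nonzero[of 1] nonzero[of 2] nonzero[of 3] turn_add_turn[of Q]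
      by (auto simp: mult_less_0_iff mult_le_0_iff)
  next
    assume opposite: "turn Q 0 * turn Q 2 < 0 \<and> turn Q 1 * turn Q 3 < 0"
    then have "nondegenerate Q"
      by (auto simp: nondegenerate_iff_turn less_Suc_eq numeral_eq_Suc)
    moreover have "closed_segment A B \<inter> closed_segment C D \<noteq> {}
        \<or> closed_segment B C \<inter> closed_segment D A \<noteq> {}"
    proof (cases "turn Q 0 * turn Q 1 < 0")
      case True
      with opposite have "cross (C - B) (D - B) * cross (C - B) (A - B) < 0"
        "cross (A - D) (B - D) * cross (A - D) (C - D) < 0"
        unfolding cross_turn by (auto simp: mult_less_0_iff)
      then show ?thesis
        using closed_segments_meet_if_cross_sign by blast
    next
      case False
      with opposite have "cross (B - A) (C - A) * cross (B - A) (D - A) < 0"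
        "cross (D - C) (A - C) * cross (D - C) (B - C) < 0"
        unfolding cross_turn by (auto simp: mult_less_0_iff)
      then show ?thesis
        using closed_segments_meet_if_cross_sign by blast
    qed
    ultimately show "self_intersecting Q"
      by (simp add: self_intersecting_def Q)
  qed
qed

lemma sum_lessThan_4: "(\<Sum>k<4. f k) = f 0 + f 1 + f 2 + f 3"
  for f :: "nat \<Rightarrow> 'a::comm_monoid_add"
  by (simp add: eval_nat_numeral add.assoc)

definition wedge :: "(nat \<Rightarrow> real) \<Rightarrow> (nat \<Rightarrow> real) \<Rightarrow> nat \<Rightarrow> nat \<Rightarrow> real" where
  "wedge x y p q = x p * y q - x q * y p"

lemma sum_wedge_squares_4:
  "(wedge x y 0 1)\<^sup>2 + (wedge x y 0 2)\<^sup>2 + (wedge x y 0 3)\<^sup>2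
      + (wedge x y 1 2)\<^sup>2 + (wedge x y 1 3)\<^sup>2 + (wedge x y 2 3)\<^sup>2
    = (\<Sum>k<4. x k * x k) * (\<Sum>k<4. y k * y k) - (\<Sum>k<4. x k * y k)\<^sup>2"
  unfolding sum_lessThan_4 wedge_def by (simp add: power2_eq_square algebra_simps)

lemma sum_mult_wedge:
  "(\<Sum>p\<in>S. x p * wedge a b q p) = a q * (\<Sum>p\<in>S. x p * b p) - b q * (\<Sum>p\<in>S. x p * a p)"
  by (simp add: wedge_def sum_distrib_left sum_subtractf algebra_simps)

text \<open>In coordinates: \<open>x \<and> \<star>(a \<and> b) = 0\<close> for every \<open>x\<close> orthogonal to \<open>a\<close> and \<open>b\<close>.\<close>
lemma wedge_hodge_eq_0:
  assumes "(\<Sum>k<4. x k * a k) = 0" "(\<Sum>k<4. x k * b k) = 0"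
  shows "x 1 * wedge a b 0 1 - x 2 * wedge a b 2 0 + x 3 * wedge a b 0 3 = 0"
    "x 0 * wedge a b 0 1 - x 2 * wedge a b 1 2 + x 3 * wedge a b 3 1 = 0"
    "x 0 * wedge a b 2 0 - x 1 * wedge a b 1 2 + x 3 * wedge a b 2 3 = 0"
    "x 0 * wedge a b 0 3 - x 1 * wedge a b 3 1 + x 2 * wedge a b 2 3 = 0"
proof -
  have "(\<Sum>p<4. x p * wedge a b q p) = 0" for q
    using assms by (simp add: sum_mult_wedge)
  from this[of 0] this[of 1] this[of 2] this[of 3] show
    "x 1 * wedge a b 0 1 - x 2 * wedge a b 2 0 + x 3 * wedge a b 0 3 = 0"
    "x 0 * wedge a b 0 1 - x 2 * wedge a b 1 2 + x 3 * wedge a b 3 1 = 0"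
    "x 0 * wedge a b 2 0 - x 1 * wedge a b 1 2 + x 3 * wedge a b 2 3 = 0"
    "x 0 * wedge a b 0 3 - x 1 * wedge a b 3 1 + x 2 * wedge a b 2 3 = 0"
    unfolding sum_lessThan_4 wedge_def by (simp_all add: algebra_simps)
qed

text \<open>\<open>W\<^sub>p\<^sub>q\<close> are the coordinates of a bivector \<open>W\<close> of \<open>\<real>\<^sup>4\<close>; the hypotheses say
  \<open>c \<and> W = d \<and> W = 0\<close>.\<close>
lemma bivector_eq_smult_wedge:
  fixes W01 W02 W03 W12 W13 W23 :: real and c d :: "nat \<Rightarrow> real"
  assumes "c 1 * W23 - c 2 * W13 + c 3 * W12 = 0" "c 0 * W23 - c 2 * W03 + c 3 * W02 = 0"
    "c 0 * W13 - c 1 * W03 + c 3 * W01 = 0" "c 0 * W12 - c 1 * W02 + c 2 * W01 = 0"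
    and "d 1 * W23 - d 2 * W13 + d 3 * W12 = 0" "d 0 * W23 - d 2 * W03 + d 3 * W02 = 0"
    "d 0 * W13 - d 1 * W03 + d 3 * W01 = 0" "d 0 * W12 - d 1 * W02 + d 2 * W01 = 0"
    and "c 0 * c 0 + c 1 * c 1 + c 2 * c 2 + c 3 * c 3 = 1"
    "d 0 * d 0 + d 1 * d 1 + d 2 * d 2 + d 3 * d 3 = 1"
    "c 0 * d 0 + c 1 * d 1 + c 2 * d 2 + c 3 * d 3 = 0"
  obtains D where "W01 = D * wedge c d 0 1" "W02 = D * wedge c d 0 2" "W03 = D * wedge c d 0 3"
    "W12 = D * wedge c d 1 2" "W13 = D * wedge c d 1 3" "W23 = D * wedge c d 2 3"
proof -
  define D where "D = W01 * wedge c d 0 1 + W02 * wedge c d 0 2 + W03 * wedge c d 0 3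
    + W12 * wedge c d 1 2 + W13 * wedge c d 1 3 + W23 * wedge c d 2 3"
  have "W01 = D * wedge c d 0 1" "W02 = D * wedge c d 0 2" "W03 = D * wedge c d 0 3"
    "W12 = D * wedge c d 1 2" "W13 = D * wedge c d 1 3" "W23 = D * wedge c d 2 3"
    using assms unfolding D_def wedge_def by algebra+
  then show ?thesis
    by (rule that)
qed

lemma vector_4 [simp]:
  "(vector [w, x, y, z] :: 'a::zero^4) $ 1 = w" "(vector [w, x, y, z] :: 'a^4) $ 2 = x"
  "(vector [w, x, y, z] :: 'a^4) $ 3 = y" "(vector [w, x, y, z] :: 'a^4) $ 4 = z"
  unfolding vector_def by simp_all

text \<open>Row \<open>k\<close> is \<open>(Re u\<^sub>k, Im u\<^sub>k, Re v\<^sub>k, Im v\<^sub>k)\<close>; for \<open>v\<^sub>k = c\<^sub>k + i d\<^sub>k\<close> the columns are the vectors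
  \<open>a, b, c, d\<close> of the paper.\<close>
definition real_frame :: "(nat \<Rightarrow> complex) \<Rightarrow> (nat \<Rightarrow> complex) \<Rightarrow> real^4^4" where
  "real_frame u v = (let r = \<lambda>k. vector [Re (u k), Im (u k), Re (v k), Im (v k)] in
     vector [r 0, r 1, r 2, r 3])"

lemma orthogonal_matrix_real_frame_iff:
  "orthogonal_matrix (real_frame u v) \<longleftrightarrow>
    (\<Sum>k<4. Re (u k) * Re (u k)) = 1 \<and> (\<Sum>k<4. Im (u k) * Im (u k)) = 1 \<and>
    (\<Sum>k<4. Re (u k) * Im (u k)) = 0 \<and>
    (\<Sum>k<4. Re (v k) * Re (u k)) = 0 \<and> (\<Sum>k<4. Re (v k) * Im (u k)) = 0 \<and>
    (\<Sum>k<4. Im (v k) * Re (u k)) = 0 \<and> (\<Sum>k<4. Im (v k) * Im (u k)) = 0 \<and>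
    (\<Sum>k<4. Re (v k) * Re (v k)) = 1 \<and> (\<Sum>k<4. Im (v k) * Im (v k)) = 1 \<and>
    (\<Sum>k<4. Re (v k) * Im (v k)) = 0"
  unfolding orthogonal_matrix vec_eq_iff forall_4
  by (simp add: real_frame_def matrix_matrix_mult_def transpose_def mat_def sum_4 sum_lessThan_4
      algebra_simps) (simp only: ac_simps conj_absorb conj_left_absorb)

lemma inner_complement:
  assumes "orthogonal_matrix (real_frame u v)" "j < 4" "k < 4" "j \<noteq> k"
  shows "Re (cnj (v j) * v k) = - Re (cnj (u j) * u k)"
proof -
  have "real_frame u v ** transpose (real_frame u v) = mat 1"
    using assms(1) by (simp add: orthogonal_matrix_def)
  then show ?thesis
    using assms(2-4)
    by (auto simp: vec_eq_iff forall_4 real_frame_def matrix_matrix_mult_def transpose_def mat_def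
        sum_4 less_Suc_eq numeral_eq_Suc algebra_simps)
qed

text \<open>The columns \<open>c, d\<close> span the orthogonal complement of \<open>a, b\<close>, so \<open>c \<and> d = \<plusminus>\<star>(a \<and> b)\<close>;
  the sign drops out of the products.\<close>
lemma cross_products_complement:
  assumes frame: "orthogonal_matrix (real_frame u v)"
  shows "cross (v 0) (v 1) * cross (v 2) (v 3) = cross (u 0) (u 1) * cross (u 2) (u 3)"
    and "cross (v 1) (v 2) * cross (v 3) (v 0) = cross (u 1) (u 2) * cross (u 3) (u 0)"
proof -
  define a b c d
    where "a k = Re (u k)" and "b k = Im (u k)" and "c k = Re (v k)" and "d k = Im (v k)" for k
  note columns = frame[unfolded orthogonal_matrix_real_frame_iff, folded a_def b_def c_def d_def]
  have cross_uv: "cross (u p) (u q) = wedge a b p q" "cross (v p) (v q) = wedge c d p q" for p q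
    by (simp_all add: cross_eq wedge_def a_def b_def c_def d_def)
  have skew: "wedge x y q p = - wedge x y p q" for x y p q
    by (simp add: wedge_def)
  have perp: "(\<Sum>k<4. c k * a k) = 0" "(\<Sum>k<4. c k * b k) = 0"
    "(\<Sum>k<4. d k * a k) = 0" "(\<Sum>k<4. d k * b k) = 0"
    using columns by simp_all
  have orthonormal: "c 0 * c 0 + c 1 * c 1 + c 2 * c 2 + c 3 * c 3 = 1"
    "d 0 * d 0 + d 1 * d 1 + d 2 * d 2 + d 3 * d 3 = 1"
    "c 0 * d 0 + c 1 * d 1 + c 2 * d 2 + c 3 * d 3 = 0"
    using columns by (simp_all add: sum_lessThan_4)
  obtain D where hodge: "wedge a b 2 3 = D * wedge c d 0 1" "wedge a b 3 1 = D * wedge c d 0 2"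
    "wedge a b 1 2 = D * wedge c d 0 3" "wedge a b 0 3 = D * wedge c d 1 2"
    "wedge a b 2 0 = D * wedge c d 1 3" "wedge a b 0 1 = D * wedge c d 2 3"
    by (rule bivector_eq_smult_wedge
        [OF wedge_hodge_eq_0[OF perp(1,2)] wedge_hodge_eq_0[OF perp(3,4)] orthonormal])
  have "1 = (wedge a b 0 1)\<^sup>2 + (wedge a b 2 0)\<^sup>2 + (wedge a b 0 3)\<^sup>2
      + (wedge a b 1 2)\<^sup>2 + (wedge a b 3 1)\<^sup>2 + (wedge a b 2 3)\<^sup>2"
    using sum_wedge_squares_4[of a b] columns skew[of a b 2 0] skew[of a b 3 1] by simp
  also have "\<dots> = D\<^sup>2 * ((wedge c d 0 1)\<^sup>2 + (wedge c d 0 2)\<^sup>2 + (wedge c d 0 3)\<^sup>2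
      + (wedge c d 1 2)\<^sup>2 + (wedge c d 1 3)\<^sup>2 + (wedge c d 2 3)\<^sup>2)"
    unfolding hodge by (simp add: power_mult_distrib distrib_left)
  also have "\<dots> = D\<^sup>2"
    using sum_wedge_squares_4[of c d] columns by simp
  finally have "D\<^sup>2 = 1" ..
  have "cross (u 0) (u 1) * cross (u 2) (u 3) = D\<^sup>2 * (wedge c d 0 1 * wedge c d 2 3)"
    unfolding cross_uv hodge(1,6) by (simp add: power2_eq_square)
  with \<open>D\<^sup>2 = 1\<close> show "cross (v 0) (v 1) * cross (v 2) (v 3) = cross (u 0) (u 1) * cross (u 2) (u 3)"
    by (simp add: cross_uv)
  have "cross (u 1) (u 2) * cross (u 3) (u 0) = D\<^sup>2 * (wedge c d 1 2 * wedge c d 3 0)"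
    unfolding cross_uv skew[of a b 3 0] skew[of c d 3 0] hodge(3,4) by (simp add: power2_eq_square)
  with \<open>D\<^sup>2 = 1\<close> show "cross (v 1) (v 2) * cross (v 3) (v 0) = cross (u 1) (u 2) * cross (u 3) (u 0)"
    by (simp add: cross_uv)
qed

lemma cross_power2_products_complement:
  assumes "orthogonal_matrix (real_frame u v)"
  shows "cross ((v 0)\<^sup>2) ((v 1)\<^sup>2) * cross ((v 2)\<^sup>2) ((v 3)\<^sup>2)
      = cross ((u 0)\<^sup>2) ((u 1)\<^sup>2) * cross ((u 2)\<^sup>2) ((u 3)\<^sup>2)"
    and "cross ((v 1)\<^sup>2) ((v 2)\<^sup>2) * cross ((v 3)\<^sup>2) ((v 0)\<^sup>2)
      = cross ((u 1)\<^sup>2) ((u 2)\<^sup>2) * cross ((u 3)\<^sup>2) ((u 0)\<^sup>2)"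
proof -
  have "Re (cnj (v 0) * v 1) = - Re (cnj (u 0) * u 1)" "Re (cnj (v 1) * v 2) = - Re (cnj (u 1) * u 2)"
    "Re (cnj (v 2) * v 3) = - Re (cnj (u 2) * u 3)" "Re (cnj (v 3) * v 0) = - Re (cnj (u 3) * u 0)"
    by (rule inner_complement[OF assms]; simp)+
  with cross_products_complement[OF assms] show
    "cross ((v 0)\<^sup>2) ((v 1)\<^sup>2) * cross ((v 2)\<^sup>2) ((v 3)\<^sup>2)
      = cross ((u 0)\<^sup>2) ((u 1)\<^sup>2) * cross ((u 2)\<^sup>2) ((u 3)\<^sup>2)"
    "cross ((v 1)\<^sup>2) ((v 2)\<^sup>2) * cross ((v 3)\<^sup>2) ((v 0)\<^sup>2)
      = cross ((u 1)\<^sup>2) ((u 2)\<^sup>2) * cross ((u 3)\<^sup>2) ((u 0)\<^sup>2)"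
    unfolding cross_power2 by algebra+
qed

lemma sum_edges: "(\<Sum>k<4. edge Q k) = 0"
  by (cases Q) (simp add: sum_lessThan_4 edge_def)

lemma edge_dual_quad:
  assumes "(\<Sum>k<4. c k * c k) = (\<Sum>k<4. d k * d k)" "(\<Sum>k<4. c k * d k) = 0" "k < 4"
  shows "edge (dual_quad K c d) k = (Complex (c k) (d k))\<^sup>2"
proof -
  define w where "w k = (Complex (c k) (d k))\<^sup>2" for k
  have "w 0 + w 1 + w 2 + w 3 = 0"
    using assms(1,2) by (simp add: w_def complex_eq_iff sum_lessThan_4 power2_eq_square algebra_simps)
  then have "w 3 = - (w 0 + w 1 + w 2)"
    by (simp only: add_eq_0_iff)
  moreover have "k = 0 \<or> k = 1 \<or> k = 2 \<or> k = 3"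
    using assms(3) by auto
  ultimately show ?thesis
    by (auto simp: edge_def dual_quad_def w_def[symmetric])
qed

lemma orthogonal_matrix_real_frame:
  assumes "(\<Sum>k<4. (u k)\<^sup>2) = 0" "(\<Sum>k<4. (cmod (u k))\<^sup>2) = 2" "perp_onb u c d"
  shows "orthogonal_matrix (real_frame u (\<lambda>k. Complex (c k) (d k)))"
proof -
  have "Re (\<Sum>k<4. (u k)\<^sup>2) = (\<Sum>k<4. Re (u k) * Re (u k)) - (\<Sum>k<4. Im (u k) * Im (u k))"
    by (simp add: Re_sum Re_power2 power2_eq_square sum_subtractf)
  moreover have "Im (\<Sum>k<4. (u k)\<^sup>2) = 2 * (\<Sum>k<4. Re (u k) * Im (u k))"
    by (simp add: Im_sum Im_power2 sum_distrib_left mult.assoc)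
  moreover have "(\<Sum>k<4. (cmod (u k))\<^sup>2) = (\<Sum>k<4. Re (u k) * Re (u k)) + (\<Sum>k<4. Im (u k) * Im (u k))"
    unfolding cmod_power2 by (simp add: power2_eq_square sum.distrib)
  ultimately have "(\<Sum>k<4. Re (u k) * Re (u k)) = 1" "(\<Sum>k<4. Im (u k) * Im (u k)) = 1"
    "(\<Sum>k<4. Re (u k) * Im (u k)) = 0"
    using assms(1,2) by simp_all
  then show ?thesis
    using assms(3)
    unfolding orthogonal_matrix_real_frame_iff perp_onb_def by (simp add: mult.commute)
qed

theorem theorem4p1:
  fixes Q :: quad and u :: "nat \<Rightarrow> complex" and c d :: "nat \<Rightarrow> real" and K :: complex
  assumes "nondegenerate Q" and "self_intersecting Q" and "perimeter Q = 2"
    and "assoc_roots Q u" and "perp_onb u c d"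
  shows "self_intersecting (dual_quad K c d)"
proof -
  define v where "v k = Complex (c k) (d k)" for k
  have roots: "edge Q k = (u k)\<^sup>2" if "k < 4" for k
    using assms(4) that by (simp add: assoc_roots_def)
  have dual_roots: "edge (dual_quad K c d) k = (v k)\<^sup>2" if "k < 4" for k
    using edge_dual_quad[OF _ _ that] assms(5) by (simp add: perp_onb_def v_def)
  have "(\<Sum>k<4. (u k)\<^sup>2) = 0"
    using sum_edges[of Q] roots by simp
  moreover have "(\<Sum>k<4. (cmod (u k))\<^sup>2) = 2"
    using assms(3) roots by (simp add: perimeter_def norm_power)
  ultimately have "orthogonal_matrix (real_frame u v)"
    using orthogonal_matrix_real_frame assms(5) unfolding v_def by blast
  moreover have "edge Q 0 = (u 0)\<^sup>2" "edge Q 1 = (u 1)\<^sup>2" "edge Q 2 = (u 2)\<^sup>2" "edge Q 3 = (u 3)\<^sup>2"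
    "edge (dual_quad K c d) 0 = (v 0)\<^sup>2" "edge (dual_quad K c d) 1 = (v 1)\<^sup>2"
    "edge (dual_quad K c d) 2 = (v 2)\<^sup>2" "edge (dual_quad K c d) 3 = (v 3)\<^sup>2"
    by (simp_all add: roots dual_roots)
  ultimately have "turn (dual_quad K c d) 0 * turn (dual_quad K c d) 2 = turn Q 0 * turn Q 2"
    "turn (dual_quad K c d) 1 * turn (dual_quad K c d) 3 = turn Q 1 * turn Q 3"
    unfolding turn_eq by (simp_all only: cross_power2_products_complement)
  then show ?thesis
    using assms(2) by (simp add: self_intersecting_iff_turn)
qed

end
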